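(* Suppose $|\hat\tau(u)-\tau(u)|\le\rho$ for every unit $u$, and let $\mathcal U_{\mathsf{LTK}}$ be the output of the LEA algorithm. Let $A_1=(\tau_K+2\rho,1]$, $K_1=|\{u:\tau(u)\in A_1\}|$, $K_0=K-K_1$, and $V(A_1)=\sum_{u:\tau(u)\in A_1}\tau(u)$. Then $$\frac{V_{\mathcal U_{\mathsf{LTK}}}([0,1])}{V_{\mathcal U^*}([0,1])}\ \ge\ 1-\frac{4\rho K_0}{V(A_1)+(\tau_K+2\rho)K_0}.$$
   Context: There are $M$ units with pairwise distinct treatment effects $\tau(u)\in[0,1]$ and a budget $K\in\{1,\dots,M\}$; $\tau_K$ is the $K$-th largest value of $\tau(u)$; $\mathcal U^*$ is the set of the $K$ units with the largest $\tau(u)$. For a set $S$ of units and an interval $A\subseteq[0,1]$, $V_S(A)=\sum_{u\in S,\,\tau(u)\in A}\tau(u)$. The LEA algorithm with parameters $\epsilon,\delta,\gamma>0$ sets $\rho=\gamma\sqrt\epsilon$, obtains for each unit an estimate $\hat\tau(u)$ (accurate to within $\rho$ with probability at least $1-\delta/M$), and outputs $\mathcal U_{\mathsf{LTK}}$, the $K$ units with largest $\hat\tau(u)$. *)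

theory Defs
  imports Complex_Main
begin

definition kth_largest :: "real set \<Rightarrow> nat \<Rightarrow> real" where
  "kth_largest S K = rev (sorted_list_of_set S) ! (K - 1)"

definition is_topK :: "('a \<Rightarrow> real) \<Rightarrow> 'a set \<Rightarrow> nat \<Rightarrow> 'a set \<Rightarrow> bool" where
  "is_topK f U K S \<longleftrightarrow> S \<subseteq> U \<and> card S = K \<and> (\<forall>u\<in>S. \<forall>v\<in>U - S. f v \<le> f u)"

definition Vsum :: "('a \<Rightarrow> real) \<Rightarrow> 'a set \<Rightarrow> real set \<Rightarrow> real" where
  "Vsum tau S A = (\<Sum>u\<in>{u\<in>S. tau u \<in> A}. tau u)"

end

theory Submission
  imports Defs
begin

text \<open>Since the effects are distinct, \<open>U*\<close> is exactly the set of units with \<open>\<tau> \<ge> \<tau>\<^sub>K\<close>. Since the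
  estimates are \<open>\<rho>\<close>-accurate, a unit left out by LEA exceeds a selected unit in true effect by at
  most \<open>2\<rho>\<close>. Hence LEA selects all units of \<open>A\<^sub>1\<close> (fewer than K of them), and every selected unit
  has \<open>\<tau> \<ge> \<tau>\<^sub>K - 2\<rho>\<close>. So both value sums contain \<open>V(A\<^sub>1)\<close>, and their remaining \<open>K\<^sub>0\<close> terms lie in
  \<open>[\<tau>\<^sub>K, \<tau>\<^sub>K + 2\<rho>]\<close> for \<open>U*\<close> and are at least \<open>\<tau>\<^sub>K - 2\<rho>\<close> for \<open>U\<^sub>L\<^sub>T\<^sub>K\<close>; the ratio bound is then
  elementary.\<close>

lemma
  fixes S :: "real set"
  assumes "finite S" "1 \<le> K" "K \<le> card S"
  shows kth_largest_mem: "kth_largest S K \<in> S"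
    and card_kth_largest_le: "card {x\<in>S. kth_largest S K \<le> x} = K"
proof -
  define xs where "xs = rev (sorted_list_of_set S)"
  have set_xs: "set xs = S" and len_xs: "length xs = card S" and "distinct xs"
    using assms(1) by (simp_all add: xs_def)
  have decreasing: "sorted_wrt (>) xs"
    by (simp add: xs_def sorted_wrt_rev)
  have kth: "kth_largest S K = xs ! (K - 1)"
    by (simp add: kth_largest_def xs_def)
  then show "kth_largest S K \<in> S"
    using assms set_xs len_xs by auto
  have "K - 1 < length xs"
    using assms len_xs by linarith
  have nth_le_iff: "xs ! (K - 1) \<le> xs ! i \<longleftrightarrow> i < K" if "i < length xs" for i
  proof (cases "i < K")
    case True
    then consider "i = K - 1" | "i < K - 1" by linarith
    then show ?thesis
      using True sorted_wrt_nth_less[OF decreasing, of i "K - 1"] \<open>K - 1 < length xs\<close>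
      by cases (simp_all add: less_imp_le)
  next
    case False
    then show ?thesis
      using sorted_wrt_nth_less[OF decreasing, of "K - 1" i] that assms(2) by (simp add: not_le)
  qed
  have "{x\<in>S. kth_largest S K \<le> x} = {x \<in> set xs. xs ! (K - 1) \<le> x}"
    by (simp add: kth set_xs)
  also have "\<dots> = (!) xs ` {..<K}"
    using nth_le_iff assms(3) len_xs by (force simp: in_set_conv_nth)
  also have "card \<dots> = K"
    using \<open>distinct xs\<close> assms len_xs by (simp add: card_image inj_on_nth)
  finally show "card {x\<in>S. kth_largest S K \<le> x} = K" .
qed

lemma
  fixes f :: "'a \<Rightarrow> real"
  assumes "finite U" "inj_on f U" "1 \<le> K" "K \<le> card U"
  shows card_ge_kth_largest_image: "card {u\<in>U. kth_largest (f ` U) K \<le> f u} = K"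
    and card_gt_kth_largest_image: "card {u\<in>U. kth_largest (f ` U) K < f u} = K - 1"
proof -
  define t where "t = kth_largest (f ` U) K"
  have "finite (f ` U)" "K \<le> card (f ` U)"
    using assms by (simp_all add: card_image)
  note kth = kth_largest_mem[OF this(1) assms(3) this(2)] card_kth_largest_le[OF this(1) assms(3) this(2)]
  have "inj_on f {u\<in>U. t \<le> f u}"
    using assms(2) by (rule inj_on_subset) blast
  then have "card {u\<in>U. t \<le> f u} = card (f ` {u\<in>U. t \<le> f u})"
    by (simp add: card_image)
  also have "f ` {u\<in>U. t \<le> f u} = {x \<in> f ` U. t \<le> x}"
    by blast
  finally show card_ge: "card {u\<in>U. t \<le> f u} = K"
    using kth(2) by (simp add: t_def)
  obtain u0 where "u0 \<in> U" "f u0 = t"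
    using kth(1) unfolding t_def by auto
  then have "{u\<in>U. t \<le> f u} = insert u0 {u\<in>U. t < f u}"
    using inj_on_eq_iff[OF assms(2) \<open>u0 \<in> U\<close>] by (auto simp: le_less)
  then show "card {u\<in>U. t < f u} = K - 1"
    using card_ge \<open>f u0 = t\<close> assms(1) by simp
qed

lemma is_topK_eq_superlevel:
  assumes "finite U" "is_topK f U K S" "card {u\<in>U. t \<le> f u} = K"
  shows "S = {u\<in>U. t \<le> f u}"
proof -
  let ?H = "{u\<in>U. t \<le> f u}"
  have S: "S \<subseteq> U" "card S = K" "\<forall>u\<in>S. \<forall>v\<in>U - S. f v \<le> f u"
    using assms(2) unfolding is_topK_def by auto
  have "finite S"
    using S(1) assms(1) finite_subset by blast
  have "S \<subseteq> ?H"
  proof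
    fix u assume "u \<in> S"
    show "u \<in> ?H"
    proof (rule ccontr)
      assume "u \<notin> ?H"
      then have "insert u ?H \<subseteq> S"
        using S \<open>u \<in> S\<close> by force
      then have "card (insert u ?H) \<le> K"
        using S(2) card_mono[OF \<open>finite S\<close>] by metis
      then show False
        using \<open>u \<notin> ?H\<close> assms(1,3) by simp
    qed
  qed
  then show ?thesis
    using card_subset_eq[of ?H S] assms(1,3) S(2) by simp
qed

lemma is_topK_perturb_le:
  assumes "is_topK g U K S" "\<forall>u\<in>U. \<bar>g u - f u\<bar> \<le> \<rho>" "v \<in> S" "w \<in> U - S"
  shows "f w \<le> f v + 2 * \<rho>"
proof -
  have "v \<in> U" "g w \<le> g v"
    using assms(1,3,4) unfolding is_topK_def by auto
  moreover have "f w \<le> g w + \<rho>" "g v \<le> f v + \<rho>"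
    using assms(2,4) \<open>v \<in> U\<close> by (auto simp: abs_le_iff)
  ultimately show ?thesis
    by linarith
qed

lemma is_topK_contains_if_far_above:
  assumes "finite U" "is_topK g U K S" "\<forall>u\<in>U. \<bar>g u - f u\<bar> \<le> \<rho>"
    and "card {v\<in>U. t < f v} < K" "u \<in> U" "t + 2 * \<rho> < f u"
  shows "u \<in> S"
proof (rule ccontr)
  assume "u \<notin> S"
  then have "S \<subseteq> {v\<in>U. t < f v}"
    using is_topK_perturb_le[OF assms(2,3)] assms(2,5,6) unfolding is_topK_def by force
  then have "card S < K"
    using card_mono[of "{v\<in>U. t < f v}" S] assms(1,4) by simp
  then show False
    using assms(2) unfolding is_topK_def by simp
qed

lemma is_topK_ge_threshold_minus:
  assumes "finite U" "is_topK g U K S" "\<forall>u\<in>U. \<bar>g u - f u\<bar> \<le> \<rho>"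
    and "S' \<subseteq> U" "card S' = K" "\<forall>w\<in>S'. t \<le> f w" "v \<in> S"
  shows "t - 2 * \<rho> \<le> f v"
proof (cases "S' \<subseteq> S")
  case True
  have "S \<subseteq> U" "card S = K"
    using assms(2) unfolding is_topK_def by auto
  then have "S' = S"
    using True card_subset_eq[of S S'] assms(1,5) finite_subset by metis
  moreover have "0 \<le> \<rho>"
    using assms(3) \<open>S \<subseteq> U\<close> \<open>v \<in> S\<close> by force
  ultimately show ?thesis
    using assms(6,7) by force
next
  case False
  then obtain w where "w \<in> S'" "w \<notin> S"
    by blast
  then show ?thesis
    using is_topK_perturb_le[OF assms(2,3,7), of w] assms(4,6) by force
qed

lemma sum_ge_subset_plus_card_diff:
  fixes f :: "'a \<Rightarrow> real"
  assumes "finite S" "A \<subseteq> S" "\<forall>u\<in>S - A. a \<le> f u"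
  shows "sum f A + real (card S - card A) * a \<le> sum f S"
  using sum_bounded_below[of "S - A" a f] assms
  by (simp add: sum.subset_diff[OF assms(2,1)] card_Diff_subset finite_subset)

lemma sum_le_subset_plus_card_diff:
  fixes f :: "'a \<Rightarrow> real"
  assumes "finite S" "A \<subseteq> S" "\<forall>u\<in>S - A. f u \<le> b"
  shows "sum f S \<le> sum f A + real (card S - card A) * b"
  using sum_bounded_above[of "S - A" f b] assms
  by (simp add: sum.subset_diff[OF assms(2,1)] card_Diff_subset finite_subset)

lemma Vsum_eq_sum:
  assumes "\<forall>u\<in>S. f u \<in> A"
  shows "Vsum f S A = sum f S"
proof -
  have "{u\<in>S. f u \<in> A} = S"
    using assms by blast
  then show ?thesis
    by (simp add: Vsum_def)
qed

lemma ratio_ge_one_minus: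
  fixes L S V K0 T \<rho> :: real
  assumes "V + K0 * (T - 2 * \<rho>) \<le> L" "V + K0 * T \<le> S" "S \<le> V + K0 * (T + 2 * \<rho>)"
    and "0 \<le> V" "0 \<le> L" "0 < K0" "0 \<le> T" "0 < \<rho>"
  shows "1 - 4 * \<rho> * K0 / (V + (T + 2 * \<rho>) * K0) \<le> L / S"
proof -
  define D where "D = V + (T + 2 * \<rho>) * K0"
  define N where "N = V + K0 * (T - 2 * \<rho>)"
  have "0 < D"
    using assms(4,6-8) unfolding D_def by (simp add: add_nonneg_pos)
  then have "1 - 4 * \<rho> * K0 / D = N / D"
    by (simp add: field_simps D_def N_def)
  also have "\<dots> \<le> L / S"
  proof (cases "N \<le> 0")
    case True
    then have "N / D \<le> 0"
      using \<open>0 < D\<close> by (simp add: divide_nonpos_pos)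
    also have "0 \<le> L / S"
    proof -
      have "0 \<le> S"
        using assms(2,4) mult_nonneg_nonneg[OF less_imp_le[OF assms(6)] assms(7)] by linarith
      then show ?thesis
        using assms(5) by simp
    qed
    finally show ?thesis .
  next
    case False
    then have "0 < S"
      using assms(2,6,8) unfolding N_def by (smt (verit) mult_left_mono)
    moreover have "S \<le> D"
      using assms(3) by (simp add: D_def algebra_simps)
    ultimately have "N / D \<le> N / S"
      using False \<open>0 < D\<close> by (simp add: divide_left_mono)
    also have "\<dots> \<le> L / S"
      using \<open>0 < S\<close> assms(1) by (simp add: N_def divide_right_mono)
    finally show ?thesis .
  qed
  finally show ?thesis
    unfolding D_def .
qed

lemma sum_ratio_ge_of_common_part:
  fixes f :: "'a \<Rightarrow> real"
  assumes "finite S" "finite S'" "A \<subseteq> S" "A \<subseteq> S'" "card S = K" "card S' = K" "card A < K"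
    and "\<forall>u\<in>S - A. t \<le> f u \<and> f u \<le> t + 2 * \<rho>" "\<forall>v\<in>S' - A. t - 2 * \<rho> \<le> f v"
    and "\<forall>u\<in>S \<union> S'. 0 \<le> f u" "0 \<le> t" "0 < \<rho>"
  shows "1 - 4 * \<rho> * (real K - real (card A)) / (sum f A + (t + 2 * \<rho>) * (real K - real (card A)))
           \<le> sum f S' / sum f S"
proof (rule ratio_ge_one_minus)
  show "sum f A + (real K - real (card A)) * (t - 2 * \<rho>) \<le> sum f S'"
    using sum_ge_subset_plus_card_diff[OF assms(2,4), where a = "t - 2 * \<rho>"] assms(6,7,9) by simp
  show "sum f A + (real K - real (card A)) * t \<le> sum f S"
    using sum_ge_subset_plus_card_diff[OF assms(1,3), where a = t] assms(5,7,8) by simp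
  show "sum f S \<le> sum f A + (real K - real (card A)) * (t + 2 * \<rho>)"
    using sum_le_subset_plus_card_diff[OF assms(1,3), where b = "t + 2 * \<rho>"] assms(5,7,8) by simp
  show "0 \<le> sum f A" "0 \<le> sum f S'"
    using assms(3,10) by (auto intro: sum_nonneg)
qed (use assms(7,11,12) in auto)

theorem claim2:
  fixes U :: "'a set" and tau tauhat :: "'a \<Rightarrow> real"
    and K :: nat and eps gamma rho :: real
    and Ustar ULTK :: "'a set"
  assumes finU: "finite U"
    and distinct: "inj_on tau U"
    and range: "\<forall>u\<in>U. 0 \<le> tau u \<and> tau u \<le> 1"
    and K: "1 \<le> K" "K \<le> card U"
    and eps: "eps > 0" and gamma: "gamma > 0"
    and rho: "rho = gamma * sqrt eps"
    and Ustar: "is_topK tau U K Ustar"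
    and est: "\<forall>u\<in>U. \<bar>tauhat u - tau u\<bar> \<le> rho"
    and ULTK: "is_topK tauhat U K ULTK"
  shows
    "let tauK = kth_largest (tau ` U) K;
         A1 = {tauK + 2 * rho <.. 1};
         K1 = card {u\<in>U. tau u \<in> A1};
         K0 = real K - real K1
     in Vsum tau ULTK {0..1} / Vsum tau Ustar {0..1}
        \<ge> 1 - 4 * rho * K0 / (Vsum tau U A1 + (tauK + 2 * rho) * K0)"
proof -
  define T where "T = kth_largest (tau ` U) K"
  define A where "A = {u\<in>U. tau u \<in> {T + 2 * rho <.. 1}}"
  have "0 < rho"
    using rho eps gamma by simp
  have "0 \<le> T"
    using kth_largest_mem[of "tau ` U" K] finU K range by (auto simp: T_def card_image[OF distinct])
  have Ustar_eq: "Ustar = {u\<in>U. T \<le> tau u}"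
    using is_topK_eq_superlevel[OF finU Ustar] card_ge_kth_largest_image[OF finU distinct K]
    by (simp add: T_def)
  have card_gt: "card {u\<in>U. T < tau u} < K"
    using card_gt_kth_largest_image[OF finU distinct K] K by (simp add: T_def)
  have Ustar_U: "Ustar \<subseteq> U" "card Ustar = K" "finite Ustar"
    and ULTK_U: "ULTK \<subseteq> U" "card ULTK = K" "finite ULTK"
    using Ustar ULTK finU finite_subset unfolding is_topK_def by auto
  have "A \<subseteq> {u\<in>U. T < tau u}"
    using \<open>0 < rho\<close> by (auto simp: A_def)
  then have "A \<subseteq> Ustar" "card A < K"
    using Ustar_eq card_mono[OF _ \<open>A \<subseteq> {u\<in>U. T < tau u}\<close>] finU card_gt by auto
  have "A \<subseteq> ULTK"
    using is_topK_contains_if_far_above[OF finU ULTK est card_gt] by (auto simp: A_def)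
  have "\<forall>u\<in>Ustar - A. T \<le> tau u \<and> tau u \<le> T + 2 * rho"
    using Ustar_eq range by (auto simp: A_def)
  moreover have "\<forall>v\<in>ULTK - A. T - 2 * rho \<le> tau v"
    using is_topK_ge_threshold_minus[OF finU ULTK est Ustar_U(1,2)] Ustar_eq by blast
  moreover have "\<forall>u\<in>Ustar \<union> ULTK. 0 \<le> tau u"
    using Ustar_U ULTK_U range by blast
  ultimately have "1 - 4 * rho * (real K - real (card A)) / (sum tau A + (T + 2 * rho) * (real K - real (card A)))
      \<le> sum tau ULTK / sum tau Ustar"
    using \<open>0 \<le> T\<close> \<open>0 < rho\<close>
    by (rule sum_ratio_ge_of_common_part[OF Ustar_U(3) ULTK_U(3) \<open>A \<subseteq> Ustar\<close> \<open>A \<subseteq> ULTK\<close>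
          Ustar_U(2) ULTK_U(2) \<open>card A < K\<close>])
  moreover have "Vsum tau ULTK {0..1} = sum tau ULTK" "Vsum tau Ustar {0..1} = sum tau Ustar"
    using Vsum_eq_sum range ULTK_U Ustar_U by (meson atLeastAtMost_iff subset_eq)+
  ultimately show ?thesis
    by (simp add: Let_def Vsum_def A_def T_def)
qed

end
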